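(* Let $L,L',q\in\mathbb{N}$, $x\in\mathbb{Z}$, with $L'\leq L/\lambda(q)$. If $B\subseteq[1,L]$ and $B'\subseteq\{\ell\in[1,L']: x+\ell\lambda(q)\in B\}$, then for every $d\in\mathbb{N}$, $$\mathcal{R}_{qd}(B',L')\leq\mathcal{R}_d(B,L).$$
   Context: Let $h\in\mathbb{Z}[x]$ have degree $k\ge2$ and positive leading coefficient, and be $\mathcal{P}$-intersective: for every prime $p$ there is $z_p\in\mathbb{Z}_p$ with $h(z_p)=0$, $z_p\not\equiv0\bmod p$; fix such $z_p$. Let $s=2^k+6$. For $d\in\mathbb{N}$, $r_d$ is the unique integer in $(-d,0]$ with $r_d\equiv z_p\bmod p^{v_p(d)}$ for all primes $p\mid d$. $\lambda$ is completely multiplicative with $\lambda(p)=p^m$, $m$ the multiplicity of $z_p$ as a root of $h$. $h_d(x)=h(r_d+dx)/\lambda(d)$; $\Lambda_d=\{x\in\mathbb{N}:r_d+dx\text{ prime}\}$; $\nu_d(x)=\frac{\phi(d)}{d}\log(r_d+dx)1_{\Lambda_d}(x)$; $H_d(L)=\{y\in\mathbb{N}:0<h_d(y)<L/s\}$; and for $B\subseteq[1,L]$, $\mathcal{R}_d(B,L)=\sum_{x\in\mathbb{Z},\,y\in H_d(L)}1_B(x)1_B(x+h_d(y))\nu_d(y)$. Here $[1,L]=\{1,\dots,L\}$. *)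

theory Defs
  imports "HOL-Number_Theory.Number_Theory" "HOL-Computational_Algebra.Polynomial"
begin

text \<open>A p-adic integer z_p is represented by its coherent sequence of residues
  zs n = z_p mod p^n, with 0 \<le> zs n < p^n.\<close>
definition padic_seq :: "nat \<Rightarrow> (nat \<Rightarrow> int) \<Rightarrow> bool" where
  "padic_seq p zs \<longleftrightarrow> (\<forall>n. 0 \<le> zs n \<and> zs n < int p ^ n) \<and>
                       (\<forall>n. zs (Suc n) mod int p ^ n = zs n)"

definition padic_vanishes :: "int poly \<Rightarrow> nat \<Rightarrow> (nat \<Rightarrow> int) \<Rightarrow> bool" where
  "padic_vanishes f p zs \<longleftrightarrow> (\<forall>n. int p ^ n dvd poly f (zs n))"

definition intersective_roots :: "int poly \<Rightarrow> (nat \<Rightarrow> nat \<Rightarrow> int) \<Rightarrow> bool" where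
  "intersective_roots h z \<longleftrightarrow>
     (\<forall>p. prime p \<longrightarrow> padic_seq p (z p) \<and> padic_vanishes h p (z p) \<and> \<not> int p dvd z p 1)"

text \<open>Multiplicity of the p-adic root z_p of h (characteristic 0 domain Z_p):
  least m with h^(m)(z_p) \<noteq> 0.\<close>
definition root_mult :: "int poly \<Rightarrow> nat \<Rightarrow> (nat \<Rightarrow> int) \<Rightarrow> nat" where
  "root_mult h p zs = (LEAST m. \<not> padic_vanishes ((pderiv ^^ m) h) p zs)"

definition lam :: "int poly \<Rightarrow> (nat \<Rightarrow> nat \<Rightarrow> int) \<Rightarrow> nat \<Rightarrow> nat" where
  "lam h z d = (\<Prod>p\<in>prime_factors d. p ^ (root_mult h p (z p) * multiplicity p d))"

definition rd :: "(nat \<Rightarrow> nat \<Rightarrow> int) \<Rightarrow> nat \<Rightarrow> int" where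
  "rd z d = (THE r. - int d < r \<and> r \<le> 0 \<and>
      (\<forall>p\<in>prime_factors d. [r = z p (multiplicity p d)] (mod (int p ^ multiplicity p d))))"

text \<open>h_d(y) = h(r_d + d y) / lambda(d) (an integer).\<close>
definition hd :: "int poly \<Rightarrow> (nat \<Rightarrow> nat \<Rightarrow> int) \<Rightarrow> nat \<Rightarrow> int \<Rightarrow> int" where
  "hd h z d y = poly h (rd z d + int d * y) div int (lam h z d)"

definition nu :: "(nat \<Rightarrow> nat \<Rightarrow> int) \<Rightarrow> nat \<Rightarrow> int \<Rightarrow> real" where
  "nu z d y = (if 1 \<le> y \<and> prime (rd z d + int d * y)
               then real (totient d) / real d * ln (real_of_int (rd z d + int d * y)) else 0)"

definition sconst :: "int poly \<Rightarrow> nat" where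
  "sconst h = 2 ^ degree h + 6"

definition Hset :: "int poly \<Rightarrow> (nat \<Rightarrow> nat \<Rightarrow> int) \<Rightarrow> nat \<Rightarrow> nat \<Rightarrow> int set" where
  "Hset h z d L = {y. 1 \<le> y \<and> 0 < hd h z d y \<and> real_of_int (hd h z d y) < real L / real (sconst h)}"

definition Rcount :: "int poly \<Rightarrow> (nat \<Rightarrow> nat \<Rightarrow> int) \<Rightarrow> nat \<Rightarrow> int set \<Rightarrow> nat \<Rightarrow> real" where
  "Rcount h z d B L = (\<Sum>x\<in>B. \<Sum>y\<in>Hset h z d L.
       (if x + hd h z d y \<in> B then nu z d y else 0))"

end

theory Submission
  imports Defs
begin

text \<open>The map \<open>(\<ell>, y) \<mapsto> (x + \<ell> \<lambda>(q), y')\<close>, where \<open>r\<^sub>d + d y' = r\<^sub>q\<^sub>d + q d y\<close>, injects the pairs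
  counted by \<open>\<R>\<^sub>q\<^sub>d(B', L')\<close> into those counted by \<open>\<R>\<^sub>d(B, L)\<close>. Such a \<open>y'\<close> exists because
  \<open>r\<^sub>q\<^sub>d \<equiv> r\<^sub>d\<close> mod \<open>d\<close> (the roots \<open>z\<^sub>p\<close> are coherent \<open>p\<close>-adic integers). Both sides then evaluate
  \<open>h\<close> at the same integer, and since \<open>\<lambda>\<close> is multiplicative and \<open>\<lambda>(qd)\<close> divides that value (Taylor
  expansion at the roots \<open>z\<^sub>p\<close> of multiplicity \<open>m\<close>), \<open>h\<^sub>d(y') = \<lambda>(q) h\<^sub>q\<^sub>d(y)\<close>; this keeps \<open>y'\<close>
  in \<open>H\<^sub>d(L)\<close> and carries shifts inside \<open>B'\<close> to shifts inside \<open>B\<close>. Finally the weights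
  satisfy \<open>\<phi>(qd)/qd \<le> \<phi>(d)/d\<close>.\<close>

lemma padic_seq_mod_power:
  assumes "padic_seq p zs" "k \<le> n"
  shows "zs n mod int p ^ k = zs k"
  using assms(2)
proof (induction n rule: dec_induct)
  case base
  then show ?case using assms(1) unfolding padic_seq_def by simp
next
  case (step n)
  have "zs (Suc n) mod int p ^ k = (zs (Suc n) mod int p ^ n) mod int p ^ k"
    using step(1) by (simp add: mod_mod_cancel le_imp_power_dvd)
  also have "\<dots> = zs n mod int p ^ k" using assms(1) unfolding padic_seq_def by simp
  finally show ?case using step by simp
qed

subsection \<open>Taylor coefficients\<close>

lemma coeff_0_funpow_pderiv:
  "coeff ((pderiv ^^ j) g) 0 = of_nat (fact j) * coeff g j"
proof (induction j arbitrary: g)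
  case (Suc j)
  have "(pderiv ^^ Suc j) g = (pderiv ^^ j) (pderiv g)"
    by (simp add: funpow_Suc_right del: funpow.simps)
  then show ?case using Suc[of "pderiv g"] by (simp add: coeff_pderiv algebra_simps)
qed simp

lemma funpow_pderiv_pcompose_shift:
  "(pderiv ^^ j) (pcompose g [:w, 1:]) = pcompose ((pderiv ^^ j) g) [:w, 1:]"
  by (induction j) (auto simp: pderiv_pcompose pderiv_pCons)

lemma fact_mult_coeff_pcompose_shift:
  "of_nat (fact j) * coeff (pcompose g [:w, 1:]) j = poly ((pderiv ^^ j) g) w"
  by (simp add: coeff_0_funpow_pderiv[symmetric] poly_0_coeff_0[symmetric]
      funpow_pderiv_pcompose_shift poly_pcompose)

lemma prime_power_dvd_if_dvd_fact_mult:
  fixes c :: int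
  assumes p: "prime p" and "j \<le> m"
    and dvd: "p ^ (e + multiplicity p (fact m)) dvd fact j * c"
  shows "p ^ e dvd c"
proof -
  have "fact j \<noteq> (0::int)" by simp
  then obtain u where u: "fact j = p ^ multiplicity p (fact j) * u" "\<not> p dvd u"
    using multiplicity_decompose' p by (metis not_prime_unit)
  have "multiplicity p (fact j :: int) \<le> multiplicity p (fact m)"
    using \<open>j \<le> m\<close> p by (intro dvd_imp_multiplicity_le fact_dvd) auto
  then have "p ^ (e + multiplicity p (fact j)) dvd fact j * c"
    using dvd by (meson add_left_mono dvd_trans le_imp_power_dvd)
  then have "p ^ multiplicity p (fact j) * p ^ e dvd p ^ multiplicity p (fact j) * (u * c)"
    using u(1) by (simp add: power_add mult.assoc mult.commute)
  then have "p ^ e dvd u * c"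
    using p by simp
  moreover have "coprime (p ^ e) u" using p u(2) by (simp add: prime_imp_coprime)
  ultimately show ?thesis by (simp add: coprime_dvd_mult_right_iff)
qed

text \<open>Expand \<open>h\<close> around a residue \<open>w\<close> of \<open>zs\<close> modulo a power of \<open>p\<close> high enough to absorb
  the factorials in the Taylor coefficients.\<close>
lemma prime_power_dvd_poly_near_padic_root:
  fixes h :: "int poly"
  assumes p: "prime p" and zs: "padic_seq p zs"
    and van: "\<And>j. j < m \<Longrightarrow> padic_vanishes ((pderiv ^^ j) h) p zs"
    and t: "[t = zs k] (mod int p ^ k)"
  shows "int p ^ (m * k) dvd poly h t"
proof -
  define N where "N = m * k + multiplicity (int p) (fact m) + k"
  define w where "w = zs N"
  define G where "G = pcompose h [:w, 1:]"
  have "[w = zs k] (mod int p ^ k)"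
    using padic_seq_mod_power[OF zs, of k N] padic_seq_mod_power[OF zs, of k k] unfolding w_def N_def cong_def by simp
  then have "int p ^ k dvd t - w" using t by (metis cong_iff_dvd_diff cong_sym cong_trans)
  then obtain u where u: "t - w = int p ^ k * u" by (auto elim: dvdE)
  have "poly h t = (\<Sum>j\<le>degree G. coeff G j * (t - w) ^ j)"
    unfolding G_def by (simp add: poly_pcompose poly_altdef[symmetric])
  also have "int p ^ (m * k) dvd \<dots>"
  proof (rule dvd_sum)
    fix j
    show "int p ^ (m * k) dvd coeff G j * (t - w) ^ j"
    proof (cases "j < m")
      case True
      have "int p ^ N dvd poly ((pderiv ^^ j) h) w"
        using van[OF True] unfolding padic_vanishes_def w_def by blast
      then have "int p ^ N dvd fact j * coeff G j"
        using fact_mult_coeff_pcompose_shift[of j h w] by (simp add: G_def)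
      then have "int p ^ (m * k + multiplicity (int p) (fact m)) dvd fact j * coeff G j"
        unfolding N_def by (rule dvd_trans[rotated]) (simp add: le_imp_power_dvd)
      with True p have "int p ^ (m * k) dvd coeff G j"
        by (metis less_imp_le prime_nat_int_transfer prime_power_dvd_if_dvd_fact_mult)
      then show ?thesis by simp
    next
      case False
      have "int p ^ (m * k) dvd int p ^ (k * j)"
        using False by (intro le_imp_power_dvd) (simp add: mult.commute)
      also have "\<dots> dvd (t - w) ^ j" unfolding u by (simp add: power_mult power_mult_distrib)
      finally show ?thesis by simp
    qed
  qed
  finally show ?thesis .
qed

lemma coprime_prime_power_factors:
  assumes "p \<in> prime_factors D" "p' \<in> prime_factors D" "p \<noteq> p'"
  shows "coprime (int p ^ a) (int p' ^ b)"
  using assms by (auto intro: primes_coprime)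

lemma prod_prime_power_factors_int:
  "D > 0 \<Longrightarrow> (\<Prod>p\<in>prime_factors D. int p ^ multiplicity p D) = int D"
  using prime_factorization_nat[of D] by (metis (mono_tags, lifting) of_nat_power of_nat_prod prod.cong)

lemma prod_dvd_if_prime_power_factors_dvd:
  assumes "\<And>p. p \<in> prime_factors D \<Longrightarrow> int p ^ f p dvd a"
  shows "(\<Prod>p\<in>prime_factors D. int p ^ f p) dvd a"
proof -
  have "[a = 0] (mod (\<Prod>p\<in>prime_factors D. int p ^ f p))"
    by (rule cong_cong_prod_coprime)
      (use assms coprime_prime_power_factors in \<open>auto simp: cong_0_iff\<close>)
  then show ?thesis by (simp add: cong_0_iff)
qed

lemma cong_if_cong_prime_power_factors:
  assumes "D > 0" "\<And>p. p \<in> prime_factors D \<Longrightarrow> [a = b] (mod int p ^ multiplicity p D)"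
  shows "[a = b] (mod int D)"
  using prod_dvd_if_prime_power_factors_dvd[of D "\<lambda>p. multiplicity p D" "a - b"] assms
  by (simp add: cong_iff_dvd_diff prod_prime_power_factors_int)

subsection \<open>The residues \<open>r\<^sub>d\<close> and the multiplicative function \<open>\<lambda>\<close>\<close>

lemma ex1_rd:
  assumes ir: "intersective_roots h z" and D: "D \<ge> 1"
  shows "\<exists>!r. - int D < r \<and> r \<le> 0 \<and>
      (\<forall>p\<in>prime_factors D. [r = z p (multiplicity p D)] (mod (int p ^ multiplicity p D)))"
    (is "\<exists>!r. ?P r")
proof (rule ex_ex1I)
  have z_nonneg: "0 \<le> z p n" if "p \<in> prime_factors D" for p n
    using ir that unfolding intersective_roots_def padic_seq_def by auto
  obtain x :: nat where x:
    "\<forall>p\<in>prime_factors D. [x = nat (z p (multiplicity p D))] (mod p ^ multiplicity p D)"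
    using chinese_remainder_nat[of "prime_factors D" "\<lambda>p. p ^ multiplicity p D"
        "\<lambda>p. nat (z p (multiplicity p D))"] coprime_prime_power_factors
    by (metis coprime_int_iff finite_set_mset of_nat_power)
  define r where "r = - ((- int x) mod int D)"
  have "[r = int x] (mod int D)" unfolding r_def
    by (metis cong_minus_minus_iff cong_mod_left cong_refl minus_minus)
  moreover have "int p ^ multiplicity p D dvd int D" for p
    by (metis multiplicity_dvd of_nat_dvd_iff of_nat_power)
  ultimately have "[r = int x] (mod int p ^ multiplicity p D)" for p
    using cong_dvd_modulus by blast
  moreover have "\<forall>p\<in>prime_factors D. [int x = z p (multiplicity p D)] (mod int p ^ multiplicity p D)"
    using x z_nonneg by (simp add: cong_int_iff[symmetric])
  moreover have "- int D < r" "r \<le> 0" unfolding r_def using D by auto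
  ultimately have "?P r" by (blast intro: cong_trans)
  then show "\<exists>r. ?P r" ..
next
  fix r r' assume r: "?P r" and r': "?P r'"
  have "[r = r'] (mod int D)"
    using D r r' by (intro cong_if_cong_prime_power_factors) (auto simp: cong_def)
  then have "[- r = - r'] (mod int D)" by (simp add: cong_minus_minus_iff)
  then show "r = r'" using r r' cong_less_imp_eq_int[of "- r" "int D" "- r'"] by simp
qed

lemma
  assumes "intersective_roots h z" and "D \<ge> 1"
  shows rd_gt: "- int D < rd z D" and rd_le_0: "rd z D \<le> 0"
    and cong_rd_root: "p \<in> prime_factors D \<Longrightarrow>
      [rd z D = z p (multiplicity p D)] (mod (int p ^ multiplicity p D))"
  using theI'[OF ex1_rd[OF assms]] unfolding rd_def[symmetric] by auto

lemma cong_rd_mult: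
  assumes ir: "intersective_roots h z" and q: "q \<ge> 1" and d: "d \<ge> 1"
  shows "[rd z (q * d) = rd z d] (mod int d)"
proof (rule cong_if_cong_prime_power_factors)
  fix p assume p: "p \<in> prime_factors d"
  then have "prime p" and "p \<in> prime_factors (q * d)"
    using q d by (auto simp: prime_factors_product)
  let ?v = "multiplicity p d" and ?V = "multiplicity p (q * d)"
  have v_le: "?v \<le> ?V" using q d by (intro dvd_imp_multiplicity_le) auto
  have zs: "padic_seq p (z p)" using ir \<open>prime p\<close> unfolding intersective_roots_def by auto
  have "[rd z (q * d) = z p ?V] (mod int p ^ ?V)"
    using cong_rd_root[OF ir, of "q * d"] q d \<open>p \<in> prime_factors (q * d)\<close> by auto
  then have "[rd z (q * d) = z p ?V] (mod int p ^ ?v)"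
    using v_le by (metis cong_dvd_modulus le_imp_power_dvd)
  moreover have "[z p ?V = z p ?v] (mod int p ^ ?v)"
    using padic_seq_mod_power[OF zs v_le] padic_seq_mod_power[OF zs order.refl]
    unfolding cong_def by simp
  moreover have "[rd z d = z p ?v] (mod int p ^ ?v)" using cong_rd_root[OF ir d p] .
  ultimately show "[rd z (q * d) = rd z d] (mod int p ^ ?v)"
    by (metis cong_sym cong_trans)
qed (use d in simp)

lemma lam_pos: "lam h z D > 0"
  unfolding lam_def by (intro prod_pos) (auto simp: prime_gt_0_nat)

lemma lam_eq_prod_superset:
  assumes "D \<ge> 1" "finite S" "prime_factors D \<subseteq> S" "\<forall>p\<in>S. prime p"
  shows "lam h z D = (\<Prod>p\<in>S. p ^ (root_mult h p (z p) * multiplicity p D))"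
  unfolding lam_def
proof (rule prod.mono_neutral_left[OF assms(2,3)], intro ballI)
  fix p assume "p \<in> S - prime_factors D"
  then have "multiplicity p D = 0" using assms by (auto simp: prime_factors_multiplicity)
  then show "p ^ (root_mult h p (z p) * multiplicity p D) = 1" by simp
qed

lemma lam_mult:
  assumes "q \<ge> 1" "d \<ge> 1"
  shows "lam h z (q * d) = lam h z q * lam h z d"
proof -
  let ?S = "prime_factors q \<union> prime_factors d"
  let ?e = "\<lambda>p n. p ^ (root_mult h p (z p) * multiplicity p n)"
  have S: "finite ?S" "\<forall>p\<in>?S. prime p" by auto
  have "lam h z (q * d) = (\<Prod>p\<in>?S. ?e p (q * d))"
    using assms S by (intro lam_eq_prod_superset) (auto simp: prime_factors_product)
  also have "\<dots> = (\<Prod>p\<in>?S. ?e p q * ?e p d)"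
  proof (rule prod.cong[OF refl])
    fix p assume "p \<in> ?S"
    then have "multiplicity p (q * d) = multiplicity p q + multiplicity p d"
      using assms by (intro prime_elem_multiplicity_mult_distrib) auto
    then show "?e p (q * d) = ?e p q * ?e p d" by (simp add: algebra_simps power_add)
  qed
  also have "\<dots> = lam h z q * lam h z d"
    using assms S lam_eq_prod_superset[of _ ?S h z] by (simp add: prod.distrib)
  finally show ?thesis .
qed

text \<open>The factor \<open>p\<^sup>m\<^sup>v\<close> of \<open>\<lambda>(D)\<close> divides the value because \<open>r\<^sub>D + D y \<equiv> z\<^sub>p\<close> mod \<open>p\<^sup>v\<close> and
  \<open>z\<^sub>p\<close> is a root of multiplicity \<open>m\<close>.\<close>
lemma lam_dvd_poly_rd:
  assumes ir: "intersective_roots h z" and D: "D \<ge> 1"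
  shows "int (lam h z D) dvd poly h (rd z D + int D * y)"
proof -
  have "int (lam h z D) = (\<Prod>p\<in>prime_factors D. int p ^ (root_mult h p (z p) * multiplicity p D))"
    unfolding lam_def by simp
  also have "\<dots> dvd poly h (rd z D + int D * y)"
  proof (rule prod_dvd_if_prime_power_factors_dvd)
    fix p assume p: "p \<in> prime_factors D"
    then have "prime p" by auto
    have "int p ^ multiplicity p D dvd int D * y"
      by (metis dvd_mult2 multiplicity_dvd of_nat_dvd_iff of_nat_power)
    then have "[rd z D + int D * y = z p (multiplicity p D)] (mod int p ^ multiplicity p D)"
      using cong_add[OF cong_rd_root[OF ir D p], of "int D * y" 0] by (simp add: cong_0_iff)
    then show "int p ^ (root_mult h p (z p) * multiplicity p D) dvd poly h (rd z D + int D * y)"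
      using ir \<open>prime p\<close> not_less_Least[of _ "\<lambda>m. \<not> padic_vanishes ((pderiv ^^ m) h) p (z p)"]
      by (intro prime_power_dvd_poly_near_padic_root)
        (auto simp: intersective_roots_def root_mult_def)
  qed
  finally show ?thesis .
qed

lemma totient_ratio_mult_le:
  assumes "q \<ge> 1" "d \<ge> 1"
  shows "real (totient (q * d)) / real (q * d) \<le> real (totient d) / real d"
proof -
  let ?f = "\<lambda>p. 1 - 1 / real p"
  have ratio: "real (totient n) / real n = (\<Prod>p\<in>prime_factors n. ?f p)" if "n \<ge> 1" for n
    using that by (simp add: totient_formula2)
  have f_bounds: "0 \<le> ?f p \<and> ?f p \<le> 1" if "p \<in> prime_factors n" for p n
  proof -
    have "real p \<ge> 1" using that by (auto simp: in_prime_factors_iff dest: prime_ge_1_nat)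
    then show ?thesis by auto
  qed
  have sub: "prime_factors d \<subseteq> prime_factors (q * d)" using assms by (simp add: prime_factors_product)
  have "(\<Prod>p\<in>prime_factors (q * d). ?f p) =
      (\<Prod>p\<in>prime_factors (q * d) - prime_factors d. ?f p) * (\<Prod>p\<in>prime_factors d. ?f p)"
    using sub by (simp add: prod.subset_diff)
  also have "\<dots> \<le> (\<Prod>p\<in>prime_factors d. ?f p)"
    using f_bounds by (intro mult_left_le_one_le prod_nonneg prod_le_1) auto
  finally show ?thesis using assms ratio[of "q * d"] ratio[of d] by simp
qed

lemma nu_nonneg: "nu z D y \<ge> 0"
proof -
  have "ln (real_of_int (rd z D + int D * y)) \<ge> 0" if "prime (rd z D + int D * y)"
    using prime_ge_1_int[OF that] by (simp del: of_int_add of_int_mult)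
  then show ?thesis unfolding nu_def by (auto simp del: of_int_add of_int_mult)
qed

lemma finite_Hset:
  assumes "degree h > 0" "D \<ge> 1"
  shows "finite (Hset h z D L)"
proof -
  define l where "l = int (lam h z D)"
  define f where "f = (\<lambda>y. rd z D + int D * y)"
  have l: "l > 0" unfolding l_def using lam_pos by simp
  have "Hset h z D L \<subseteq> f -` (\<Union>v\<in>{1..l * (int L + 1)}. {t. poly (h - [:v:]) t = 0})"
  proof
    fix y assume y: "y \<in> Hset h z D L"
    have hd: "hd h z D y = poly h (f y) div l" unfolding hd_def f_def l_def by simp
    have "real L / real (sconst h) \<le> real L / 1"
      unfolding sconst_def by (intro divide_left_mono) (auto intro: add_nonneg_pos)
    then have "poly h (f y) div l \<in> {1..int L}" using y hd unfolding Hset_def by auto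
    then have "poly h (f y) \<in> {1..l * (int L + 1)}"
      using l by (smt (verit) atLeastAtMost_iff nonzero_mult_div_cancel_left pos_imp_zdiv_pos_iff
          zdiv_mono1)
    then show "y \<in> f -` (\<Union>v\<in>{1..l * (int L + 1)}. {t. poly (h - [:v:]) t = 0})" by auto
  qed
  moreover have "finite {t. poly (h - [:v:]) t = 0}" for v
    using assms(1) by (intro poly_roots_finite) auto
  moreover have "inj f" unfolding f_def inj_def using assms(2) by auto
  ultimately show ?thesis by (meson finite_UN_I finite_atLeastAtMost_int finite_subset finite_vimageI)
qed

subsection \<open>Lifting from modulus \<open>q d\<close> to modulus \<open>d\<close>\<close>

text \<open>Since \<open>r\<^sub>q\<^sub>d \<equiv> r\<^sub>d\<close> mod \<open>d\<close>, the division below is exact and \<open>y' = lift z q d y\<close> satisfies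
  \<open>r\<^sub>d + d y' = r\<^sub>q\<^sub>d + q d y\<close>.\<close>
definition lift :: "(nat \<Rightarrow> nat \<Rightarrow> int) \<Rightarrow> nat \<Rightarrow> nat \<Rightarrow> int \<Rightarrow> int" where
  "lift z q d y = (rd z (q * d) - rd z d) div int d + int q * y"

context
  fixes h :: "int poly" and z :: "nat \<Rightarrow> nat \<Rightarrow> int" and q d :: nat
  assumes ir: "intersective_roots h z" and q: "q \<ge> 1" and d: "d \<ge> 1"
begin

lemma rd_add_lift: "rd z d + int d * lift z q d y = rd z (q * d) + int (q * d) * y"
proof -
  have "int d dvd rd z (q * d) - rd z d"
    using cong_rd_mult[OF ir q d] by (simp add: cong_iff_dvd_diff)
  then show ?thesis unfolding lift_def by (simp add: algebra_simps)
qed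

lemma lift_ge_1:
  assumes "y \<ge> 1"
  shows "lift z q d y \<ge> 1"
proof -
  have "- int (q * d) < rd z (q * d)" "rd z d \<le> 0"
    using rd_gt[OF ir, of "q * d"] rd_le_0[OF ir d] q d by auto
  then have "int d * (lift z q d 1) > 0"
    using rd_add_lift[of 1] by (simp add: algebra_simps)
  then have "lift z q d 1 \<ge> 1" using d by (simp add: zero_less_mult_iff)
  moreover have "int q * y \<ge> int q * 1" using assms by (intro mult_left_mono) auto
  ultimately show ?thesis unfolding lift_def by simp
qed

lemma inj_lift: "inj (lift z q d)"
  unfolding lift_def inj_def using q by auto

lemma hd_lift: "hd h z d (lift z q d y) = int (lam h z q) * hd h z (q * d) y"
proof -
  have "int (lam h z q) * int (lam h z d) dvd poly h (rd z (q * d) + int (q * d) * y)"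
    using lam_dvd_poly_rd[OF ir, of "q * d" y] lam_mult[OF q d] q d by simp
  then obtain k where k: "poly h (rd z (q * d) + int (q * d) * y) = int (lam h z q) * int (lam h z d) * k"
    by (elim dvdE)
  have "lam h z q > 0" "lam h z d > 0" using lam_pos by auto
  then show ?thesis
    unfolding hd_def rd_add_lift lam_mult[OF q d] k by simp
qed

lemma nu_le_nu_lift:
  assumes "y \<ge> 1"
  shows "nu z (q * d) y \<le> nu z d (lift z q d y)"
proof (cases "prime (rd z (q * d) + int (q * d) * y)")
  case True
  let ?N = "rd z (q * d) + int (q * d) * y"
  have "ln (real_of_int ?N) \<ge> 0"
    using prime_ge_1_int[OF True] by (simp del: of_int_add of_int_mult of_nat_mult)
  then have "real (totient (q * d)) / real (q * d) * ln (real_of_int ?N)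
      \<le> real (totient d) / real d * ln (real_of_int ?N)"
    using totient_ratio_mult_le[OF q d] by (rule mult_right_mono[rotated])
  then show ?thesis
    using True assms lift_ge_1[OF assms] unfolding nu_def rd_add_lift
    by (simp del: of_int_add of_int_mult of_nat_mult)
next
  case False
  then show ?thesis using nu_nonneg[of z d] by (simp add: nu_def)
qed

lemma lift_mem_Hset:
  assumes L: "real L' \<le> real L / real (lam h z q)" and y: "y \<in> Hset h z (q * d) L'"
  shows "lift z q d y \<in> Hset h z d L"
proof -
  have lq: "real (lam h z q) \<ge> 1" using lam_pos[of h z q] by linarith
  have s: "real (sconst h) > 0" unfolding sconst_def by (auto intro: add_nonneg_pos)
  have "real_of_int (hd h z (q * d) y) < real L' / real (sconst h)"
    using y unfolding Hset_def by auto
  then have "real (lam h z q) * real_of_int (hd h z (q * d) y) <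
      real (lam h z q) * (real L' / real (sconst h))"
    using lq by (intro mult_strict_left_mono) auto
  also have "\<dots> \<le> real L / real (sconst h)"
    using L lq s by (simp add: field_simps)
  finally show ?thesis
    using y lift_ge_1 lam_pos[of h z q] unfolding Hset_def by (simp add: hd_lift)
qed

end

lemma sum_le_sum_inj_on:
  fixes f g :: "'a \<Rightarrow> 'b::ordered_comm_monoid_add"
  assumes "finite T" "inj_on \<phi> S" "\<phi> ` S \<subseteq> T"
    and "\<And>s. s \<in> S \<Longrightarrow> f s \<le> g (\<phi> s)" "\<And>t. t \<in> T \<Longrightarrow> 0 \<le> g t"
  shows "sum f S \<le> sum g T"
proof -
  have "sum f S \<le> sum (g \<circ> \<phi>) S" using assms(4) by (intro sum_mono) simp
  also have "\<dots> = sum g (\<phi> ` S)" using assms(2) by (simp add: sum.reindex)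
  also have "\<dots> \<le> sum g T" using assms(1,3,5) by (intro sum_mono2) auto
  finally show ?thesis .
qed

lemma Rcount_eq_sum_Times:
  "Rcount h z D B L = (\<Sum>(x, y)\<in>B \<times> Hset h z D L. if x + hd h z D y \<in> B then nu z D y else 0)"
  unfolding Rcount_def by (simp add: sum.cartesian_product)

theorem proposition1:
  fixes h :: "int poly" and z :: "nat \<Rightarrow> nat \<Rightarrow> int"
    and L L' q d :: nat and x :: int and B B' :: "int set"
  assumes "degree h \<ge> 2" and "lead_coeff h > 0"
    and "intersective_roots h z"
    and "q \<ge> 1" and "d \<ge> 1"
    and "real L' \<le> real L / real (lam h z q)"
    and "B \<subseteq> {1..int L}"
    and "B' \<subseteq> {l \<in> {1..int L'}. x + l * int (lam h z q) \<in> B}"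
  shows "Rcount h z (q * d) B' L' \<le> Rcount h z d B L"
  unfolding Rcount_eq_sum_Times
proof (rule sum_le_sum_inj_on)
  note ir = assms(3) and q = assms(4) and d = assms(5)
  let ?\<phi> = "\<lambda>(l, y). (x + l * int (lam h z q), lift z q d y)"
  show "finite (B \<times> Hset h z d L)"
    using assms(1,5,7) finite_Hset[of h d z L] finite_subset by auto
  show "inj_on ?\<phi> (B' \<times> Hset h z (q * d) L')"
    using inj_lift[OF ir q d] lam_pos[of h z q] by (auto simp: inj_on_def inj_def)
  show "?\<phi> ` (B' \<times> Hset h z (q * d) L') \<subseteq> B \<times> Hset h z d L"
    using assms(8) lift_mem_Hset[OF ir q d assms(6)] by auto
  show "0 \<le> (case p of (u, v) \<Rightarrow> if u + hd h z d v \<in> B then nu z d v else 0)" for p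
    using nu_nonneg by (auto split: prod.split)
  fix s assume "s \<in> B' \<times> Hset h z (q * d) L'"
  then obtain l y where s: "s = (l, y)" "y \<in> Hset h z (q * d) L'" by auto
  then have "y \<ge> 1" unfolding Hset_def by simp
  have "l + hd h z (q * d) y \<in> B' \<Longrightarrow> x + l * int (lam h z q) + hd h z d (lift z q d y) \<in> B"
    using assms(8) by (auto simp: hd_lift[OF ir q d] algebra_simps)
  then show "(case s of (l, y) \<Rightarrow> if l + hd h z (q * d) y \<in> B' then nu z (q * d) y else 0)
      \<le> (case ?\<phi> s of (u, v) \<Rightarrow> if u + hd h z d v \<in> B then nu z d v else 0)"
    using nu_le_nu_lift[OF ir q d \<open>y \<ge> 1\<close>] nu_nonneg[of z "q * d" y] s by auto
qed

end
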